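(* Let $(x,y)$ be an $\mathbf{x}$-vertex of $S$ and let $x'$ be a vertex of $P_A$ adjacent to $x$ in $P_A$. Then there exists $y^*$ with $\operatorname{supp}(y^* )\subseteq\operatorname{supp}(y)$ such that $(x',y^* )$ is a vertex of $S$ adjacent to $(x,y)$ if and only if $(a_1x',a_2x')\in\operatorname{Band}_{\mathbf{x}}(y)$.
   Context: Let $A\in\mathbb{R}^{m_1\times n_1}$, $a_1,a_2\in\mathbb{R}^{1\times n_1}$, $b_1,b_2\in\mathbb{R}^{1\times n_2}$, $B\in\mathbb{R}^{m_2\times n_2}$, $c_A\in\mathbb{R}^{m_1}$, $c_B\in\mathbb{R}^{m_2}$, and scalars $c_a^1,c_a^2,c_b^1,c_b^2$. Consider the ($3$-sum) polyhedron $S=\{(x,y)\in\mathbb{R}^{n_1}\times\mathbb{R}^{n_2}: Ax=c_A,\ a_1x+b_1y=c_a^1+c_b^1,\ a_2x+b_2y=c_a^2+c_b^2,\ By=c_B,\ x,y\ge 0\}$, assumed simple (nondegenerate). Let $P_A=\{x: Ax=c_A, x\ge 0\}$. A vertex $(x,y)$ of $S$ is an $\mathbf{x}$-vertex if $x$ is a vertex of $P_A$. For such a vertex, $\operatorname{Band}_{\mathbf{x}}(y):=\{(c_a^1+c_b^1-b_1z,\ c_a^2+c_b^2-b_2z) : Bz=c_B,\ \operatorname{supp}(z)\subseteq\operatorname{supp}(y),\ z\ge 0\}\subseteq\mathbb{R}^2$, where $\operatorname{supp}$ denotes the set of indices of nonzero coordinates. *)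

theory Defs
  imports "HOL-Analysis.Analysis"
begin

definition supp :: "real^'n \<Rightarrow> 'n set" where
  "supp v = {i. v $ i \<noteq> 0}"

definition nonneg :: "real^'n \<Rightarrow> bool" where
  "nonneg v \<longleftrightarrow> (\<forall>i. 0 \<le> v $ i)"

definition PA :: "real^'n^'m \<Rightarrow> real^'m \<Rightarrow> (real^'n) set" where
  "PA A cA = {x. A *v x = cA \<and> nonneg x}"

definition S3 :: "real^'n1^'m1 \<Rightarrow> real^'n1 \<Rightarrow> real^'n1 \<Rightarrow> real^'n2 \<Rightarrow> real^'n2 \<Rightarrow> real^'n2^'m2
    \<Rightarrow> real^'m1 \<Rightarrow> real^'m2 \<Rightarrow> real \<Rightarrow> real \<Rightarrow> real \<Rightarrow> real \<Rightarrow> ((real^'n1) \<times> (real^'n2)) set" where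
  "S3 A a1 a2 b1 b2 B cA cB ca1 ca2 cb1 cb2 =
     {(x, y). A *v x = cA \<and> a1 \<bullet> x + b1 \<bullet> y = ca1 + cb1 \<and> a2 \<bullet> x + b2 \<bullet> y = ca2 + cb2
        \<and> B *v y = cB \<and> nonneg x \<and> nonneg y}"

definition S3_kernel :: "real^'n1^'m1 \<Rightarrow> real^'n1 \<Rightarrow> real^'n1 \<Rightarrow> real^'n2 \<Rightarrow> real^'n2 \<Rightarrow> real^'n2^'m2
    \<Rightarrow> ((real^'n1) \<times> (real^'n2)) set" where
  "S3_kernel A a1 a2 b1 b2 B =
     {(u, v). A *v u = 0 \<and> a1 \<bullet> u + b1 \<bullet> v = 0 \<and> a2 \<bullet> u + b2 \<bullet> v = 0 \<and> B *v v = 0}"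

text \<open>Simple (nondegenerate): every vertex of S has exactly rank(M) nonzero coordinates,
  where M is the constraint matrix of S; rank(M) = n1 + n2 - dim ker M.\<close>
definition simple3 :: "real^'n1^'m1 \<Rightarrow> real^'n1 \<Rightarrow> real^'n1 \<Rightarrow> real^'n2 \<Rightarrow> real^'n2 \<Rightarrow> real^'n2^'m2
    \<Rightarrow> real^'m1 \<Rightarrow> real^'m2 \<Rightarrow> real \<Rightarrow> real \<Rightarrow> real \<Rightarrow> real \<Rightarrow> bool" where
  "simple3 A a1 a2 b1 b2 B cA cB ca1 ca2 cb1 cb2 \<longleftrightarrow>
     (\<forall>x y. (x, y) extreme_point_of S3 A a1 a2 b1 b2 B cA cB ca1 ca2 cb1 cb2 \<longrightarrow>
        card (supp x) + card (supp y) + dim (S3_kernel A a1 a2 b1 b2 B) = CARD('n1) + CARD('n2))"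

definition adjacent :: "'a::real_vector set \<Rightarrow> 'a \<Rightarrow> 'a \<Rightarrow> bool" where
  "adjacent P u v \<longleftrightarrow> u extreme_point_of P \<and> v extreme_point_of P \<and> u \<noteq> v
      \<and> closed_segment u v face_of P"

definition Band :: "real^'n2 \<Rightarrow> real^'n2 \<Rightarrow> real^'n2^'m2 \<Rightarrow> real^'m2
    \<Rightarrow> real \<Rightarrow> real \<Rightarrow> real \<Rightarrow> real \<Rightarrow> real^'n2 \<Rightarrow> (real \<times> real) set" where
  "Band b1 b2 B cB ca1 ca2 cb1 cb2 y =
     {(ca1 + cb1 - b1 \<bullet> z, ca2 + cb2 - b2 \<bullet> z) | z. B *v z = cB \<and> supp z \<subseteq> supp y \<and> nonneg z}"

end

theory Submission
  imports Defs
begin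

text \<open>Let \<open>p = (x, y)\<close> and, for a point \<open>z\<close> of the band, \<open>q = (x', z)\<close>. Conversely, a vertex of \<open>S\<close> is determined by its \<open>x\<close>-part among the
  points of \<open>S\<close> whose \<open>y\<close>-part is supported in \<open>supp y\<close>: otherwise the difference of two
  \<open>y\<close>-parts could be added to and subtracted from \<open>y\<close> in small amounts while staying in \<open>S\<close>.
  If a point of \<open>[p, q]\<close> lies strictly between two points of \<open>S\<close>, the \<open>x\<close>-parts of these
  lie on the edge \<open>[x, x']\<close> of \<open>P_A\<close> and their \<open>y\<close>-parts are supported in \<open>supp y\<close>, so by
  uniqueness they are points of \<open>[p, q]\<close>. Hence \<open>[p, q]\<close> is an edge of \<open>S\<close> and \<open>q\<close> a vertex.\<close>

lemma supp_closed_segment_subset: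
  fixes y z :: "real^'n"
  assumes "v \<in> closed_segment y z"
  shows "supp v \<subseteq> supp y \<union> supp z"
  using assms by (auto simp: in_segment supp_def)

lemma supp_subset_convex_combination:
  fixes u v :: "real^'n"
  assumes "nonneg u" "nonneg v" "0 \<le> t" "t < 1"
  shows "supp u \<subseteq> supp ((1 - t) *\<^sub>R u + t *\<^sub>R v)"
proof
  fix i assume "i \<in> supp u"
  then have "0 < (1 - t) * u $ i"
    using assms(1,4) by (auto simp: supp_def nonneg_def less_le)
  moreover have "0 \<le> t * v $ i"
    using assms(2,3) by (simp add: nonneg_def)
  ultimately show "i \<in> supp ((1 - t) *\<^sub>R u + t *\<^sub>R v)"
    by (simp add: supp_def)
qed

lemma nonneg_perturbation_within_supp:
  fixes w y :: "real^'n"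
  assumes "supp w \<subseteq> supp y" "nonneg y"
  obtains e where "e > 0" "\<And>c. \<bar>c\<bar> \<le> e \<Longrightarrow> nonneg (y + c *\<^sub>R w)"
proof
  define f where "f i = (if w $ i = 0 then 1 else y $ i / \<bar>w $ i\<bar>)" for i
  have f_pos: "f i > 0" for i
    using assms by (auto simp: f_def supp_def nonneg_def less_le)
  show "Min (range f) > 0"
    using f_pos by simp
  fix c :: real assume c: "\<bar>c\<bar> \<le> Min (range f)"
  have "0 \<le> y $ i + c * w $ i" for i
  proof (cases "w $ i = 0")
    case True
    then show ?thesis using assms(2) by (simp add: nonneg_def)
  next
    case False
    have "\<bar>c * w $ i\<bar> \<le> f i * \<bar>w $ i\<bar>"
      using c Min_le[of "range f" "f i"] by (simp add: abs_mult mult_right_mono)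
    also have "\<dots> = y $ i"
      using False by (simp add: f_def)
    finally show ?thesis by linarith
  qed
  then show "nonneg (y + c *\<^sub>R w)"
    by (simp add: nonneg_def)
qed

lemma extreme_point_of_antipodal:
  assumes "p extreme_point_of S" "p + d \<in> S" "p - d \<in> S"
  shows "d = 0"
proof (rule ccontr)
  assume "d \<noteq> 0"
  then have "p + d \<noteq> p - d"
    by (simp add: algebra_simps flip: scaleR_2)
  moreover have "p = midpoint (p + d) (p - d)"
    by (simp add: midpoint_def scaleR_2[symmetric])
  ultimately have "p \<in> open_segment (p + d) (p - d)"
    by (metis midpoint_in_open_segment)
  then show False
    using assms by (auto simp: extreme_point_of_def)
qed

lemma face_of_linear_preimage_point:
  assumes "F face_of P" "linear f" "f a \<in> P" "f b \<in> P" "w \<in> open_segment a b" "f w \<in> F"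
  shows "f a \<in> F"
proof -
  obtain t where t: "0 < t" "t < 1" "w = (1 - t) *\<^sub>R a + t *\<^sub>R b"
    using assms(5) by (auto simp: in_segment)
  have fw: "f w = (1 - t) *\<^sub>R f a + t *\<^sub>R f b"
    using t(3) assms(2) by (simp add: linear_add linear_scale)
  show ?thesis
  proof (cases "f a = f b")
    case True
    then show ?thesis
      using fw assms(6) by (simp add: scaleR_add_left[symmetric])
  next
    case False
    then have "f w \<in> open_segment (f a) (f b)"
      using fw t by (auto simp: in_segment)
    then show ?thesis
      using face_ofD[OF assms(1) _ assms(3,4,6)] by blast
  qed
qed

lemma convex_S3:
  fixes A :: "real^'n1^'m1" and B :: "real^'n2^'m2"
  shows "convex (S3 A a1 a2 b1 b2 B cA cB ca1 ca2 cb1 cb2)"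
proof (rule convexI)
  fix p q :: "(real^'n1) \<times> (real^'n2)" and s t :: real
  assume "p \<in> S3 A a1 a2 b1 b2 B cA cB ca1 ca2 cb1 cb2" "q \<in> S3 A a1 a2 b1 b2 B cA cB ca1 ca2 cb1 cb2"
    and st: "0 \<le> s" "0 \<le> t" "s + t = 1"
  moreover have "\<alpha> \<bullet> (s *\<^sub>R u + t *\<^sub>R u') + \<beta> \<bullet> (s *\<^sub>R v + t *\<^sub>R v') = c"
    if "\<alpha> \<bullet> u + \<beta> \<bullet> v = c" "\<alpha> \<bullet> u' + \<beta> \<bullet> v' = c"
    for \<alpha> u u' :: "real^'n1" and \<beta> v v' :: "real^'n2" and c
  proof -
    have "\<alpha> \<bullet> (s *\<^sub>R u + t *\<^sub>R u') + \<beta> \<bullet> (s *\<^sub>R v + t *\<^sub>R v')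
        = s * (\<alpha> \<bullet> u + \<beta> \<bullet> v) + t * (\<alpha> \<bullet> u' + \<beta> \<bullet> v')"
      by (simp add: algebra_simps)
    then show ?thesis
      using that st(3) by (metis distrib_right mult_1)
  qed
  moreover have "s *\<^sub>R c + t *\<^sub>R c = c" for c :: "real^'m"
    using st(3) by (metis scaleR_add_left scaleR_one)
  ultimately show "s *\<^sub>R p + t *\<^sub>R q \<in> S3 A a1 a2 b1 b2 B cA cB ca1 ca2 cb1 cb2"
    by (cases p, cases q)
      (auto simp: S3_def nonneg_def matrix_vector_right_distrib matrix_vector_mult_scaleR)
qed

lemma S3_fst_in_PA: "(u, v) \<in> S3 A a1 a2 b1 b2 B cA cB ca1 ca2 cb1 cb2 \<Longrightarrow> u \<in> PA A cA"
  by (simp add: S3_def PA_def)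

lemma extreme_point_of_S3_snd_unique:
  fixes x u :: "real^'n1" and y v v' :: "real^'n2"
  assumes ext: "(x, y) extreme_point_of S3 A a1 a2 b1 b2 B cA cB ca1 ca2 cb1 cb2"
    and "(u, v) \<in> S3 A a1 a2 b1 b2 B cA cB ca1 ca2 cb1 cb2"
    and "(u, v') \<in> S3 A a1 a2 b1 b2 B cA cB ca1 ca2 cb1 cb2"
    and "supp v \<subseteq> supp y" "supp v' \<subseteq> supp y"
  shows "v = v'"
proof -
  let ?S = "S3 A a1 a2 b1 b2 B cA cB ca1 ca2 cb1 cb2"
  define w where "w = v - v'"
  have y: "(x, y) \<in> ?S"
    using ext by (simp add: extreme_point_of_def)
  have "supp w \<subseteq> supp y"
    using assms(4,5) unfolding w_def supp_def by force
  moreover have "nonneg y"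
    using y by (simp add: S3_def)
  ultimately obtain e where e: "e > 0" "\<And>c. \<bar>c\<bar> \<le> e \<Longrightarrow> nonneg (y + c *\<^sub>R w)"
    using nonneg_perturbation_within_supp by blast
  have w_kernel: "B *v w = 0" "b1 \<bullet> w = 0" "b2 \<bullet> w = 0"
    using assms(2,3) by (auto simp: S3_def w_def matrix_vector_mult_diff_distrib inner_diff_right)
  have perturbed: "(x, y + c *\<^sub>R w) \<in> ?S" if "\<bar>c\<bar> \<le> e" for c
    using y w_kernel e(2)[OF that]
    by (simp add: S3_def matrix_vector_right_distrib matrix_vector_mult_scaleR inner_add_right)
  have "(x, y) + (0, e *\<^sub>R w) \<in> ?S" "(x, y) - (0, e *\<^sub>R w) \<in> ?S"
    using perturbed[of e] perturbed[of "-e"] e(1) by simp_all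
  then have "(0 :: real^'n1, e *\<^sub>R w) = 0"
    by (rule extreme_point_of_antipodal[OF ext])
  then show ?thesis
    using e(1) by (simp add: w_def zero_prod_def)
qed

lemma S3_mem_segment_of_open_segment:
  assumes ext: "(x, y) extreme_point_of S3 A a1 a2 b1 b2 B cA cB ca1 ca2 cb1 cb2"
    and q: "(x', z) \<in> S3 A a1 a2 b1 b2 B cA cB ca1 ca2 cb1 cb2" "supp z \<subseteq> supp y"
    and edge: "closed_segment x x' face_of PA A cA"
    and ab: "a \<in> S3 A a1 a2 b1 b2 B cA cB ca1 ca2 cb1 cb2" "b \<in> S3 A a1 a2 b1 b2 B cA cB ca1 ca2 cb1 cb2"
    and w: "w \<in> closed_segment (x, y) (x', z)" "w \<in> open_segment a b"
  shows "a \<in> closed_segment (x, y) (x', z)"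
proof -
  let ?S = "S3 A a1 a2 b1 b2 B cA cB ca1 ca2 cb1 cb2"
  have "fst w \<in> closed_segment x x'"
    using w(1) closed_segment_linear_image[OF linear_fst, of "(x, y)" "(x', z)"] by auto
  then have "fst a \<in> closed_segment x x'"
    using face_of_linear_preimage_point[OF edge linear_fst _ _ w(2)] ab
    by (metis S3_fst_in_PA prod.collapse)
  then obtain m where m: "0 \<le> m" "m \<le> 1" "fst a = (1 - m) *\<^sub>R x + m *\<^sub>R x'"
    by (auto simp: in_segment)
  define r where "r = (1 - m) *\<^sub>R (x, y) + m *\<^sub>R (x', z)"
  have r: "r \<in> closed_segment (x, y) (x', z)"
    using m by (auto simp: r_def in_segment)
  moreover have "r \<in> ?S"
    using r convex_S3 ext q(1)
    by (meson closed_segment_subset extreme_point_of_def subsetD)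
  moreover have "supp (snd r) \<subseteq> supp y"
    using q(2) supp_closed_segment_subset[of "snd r" y z] m by (auto simp: r_def in_segment)
  moreover have "supp (snd a) \<subseteq> supp y"
  proof -
    obtain t where t: "0 < t" "t < 1" "w = (1 - t) *\<^sub>R a + t *\<^sub>R b"
      using w(2) by (auto simp: in_segment)
    have "supp (snd a) \<subseteq> supp (snd w)"
      using supp_subset_convex_combination[of "snd a" "snd b" t] ab t
      by (cases a, cases b) (auto simp: S3_def)
    also have "\<dots> \<subseteq> supp y"
      using q(2) supp_closed_segment_subset[of "snd w" y z]
        closed_segment_linear_image[OF linear_snd, of "(x, y)" "(x', z)"] w(1)
      by auto
    finally show ?thesis .
  qed
  moreover have "fst r = fst a"
    using m(3) by (simp add: r_def)
  ultimately have "a = r"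
    using extreme_point_of_S3_snd_unique[OF ext, of "fst a" "snd a" "snd r"] ab(1)
    by (metis prod.collapse)
  then show ?thesis
    using r by simp
qed

lemma closed_segment_S3_face_of:
  assumes "(x, y) extreme_point_of S3 A a1 a2 b1 b2 B cA cB ca1 ca2 cb1 cb2"
    and "(x', z) \<in> S3 A a1 a2 b1 b2 B cA cB ca1 ca2 cb1 cb2" "supp z \<subseteq> supp y"
    and "closed_segment x x' face_of PA A cA"
  shows "closed_segment (x, y) (x', z) face_of S3 A a1 a2 b1 b2 B cA cB ca1 ca2 cb1 cb2"
  unfolding face_of_def
proof (intro conjI ballI impI)
  show "closed_segment (x, y) (x', z) \<subseteq> S3 A a1 a2 b1 b2 B cA cB ca1 ca2 cb1 cb2"
    using assms(1,2) by (intro closed_segment_subset convex_S3) (auto simp: extreme_point_of_def)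
  fix a b w
  assume "a \<in> S3 A a1 a2 b1 b2 B cA cB ca1 ca2 cb1 cb2" "b \<in> S3 A a1 a2 b1 b2 B cA cB ca1 ca2 cb1 cb2"
    "w \<in> closed_segment (x, y) (x', z)" "w \<in> open_segment a b"
  then show "a \<in> closed_segment (x, y) (x', z)" "b \<in> closed_segment (x, y) (x', z)"
    using S3_mem_segment_of_open_segment[OF assms] by (metis open_segment_commute)+
qed simp

theorem lemma6:
  fixes A :: "real^'n1^'m1" and B :: "real^'n2^'m2"
    and a1 a2 :: "real^'n1" and b1 b2 :: "real^'n2"
    and cA :: "real^'m1" and cB :: "real^'m2"
    and ca1 ca2 cb1 cb2 :: real
    and x x' :: "real^'n1" and y :: "real^'n2"
  assumes "simple3 A a1 a2 b1 b2 B cA cB ca1 ca2 cb1 cb2"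
    and "(x, y) extreme_point_of S3 A a1 a2 b1 b2 B cA cB ca1 ca2 cb1 cb2"
    and "x extreme_point_of PA A cA"
    and "adjacent (PA A cA) x x'"
  shows "(\<exists>ys. supp ys \<subseteq> supp y \<and> (x', ys) extreme_point_of S3 A a1 a2 b1 b2 B cA cB ca1 ca2 cb1 cb2
            \<and> adjacent (S3 A a1 a2 b1 b2 B cA cB ca1 ca2 cb1 cb2) (x, y) (x', ys))
         \<longleftrightarrow> (a1 \<bullet> x', a2 \<bullet> x') \<in> Band b1 b2 B cB ca1 ca2 cb1 cb2 y"
proof
  assume "\<exists>ys. supp ys \<subseteq> supp y \<and> (x', ys) extreme_point_of S3 A a1 a2 b1 b2 B cA cB ca1 ca2 cb1 cb2
            \<and> adjacent (S3 A a1 a2 b1 b2 B cA cB ca1 ca2 cb1 cb2) (x, y) (x', ys)"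
  then obtain ys where "supp ys \<subseteq> supp y" "(x', ys) \<in> S3 A a1 a2 b1 b2 B cA cB ca1 ca2 cb1 cb2"
    by (auto simp: extreme_point_of_def)
  then show "(a1 \<bullet> x', a2 \<bullet> x') \<in> Band b1 b2 B cB ca1 ca2 cb1 cb2 y"
    unfolding Band_def S3_def by force
next
  let ?S = "S3 A a1 a2 b1 b2 B cA cB ca1 ca2 cb1 cb2"
  assume "(a1 \<bullet> x', a2 \<bullet> x') \<in> Band b1 b2 B cB ca1 ca2 cb1 cb2 y"
  then obtain z where z: "(x', z) \<in> ?S" "supp z \<subseteq> supp y"
    using assms(4) by (fastforce simp: Band_def S3_def PA_def adjacent_def extreme_point_of_def)
  have edge: "closed_segment x x' face_of PA A cA" "x \<noteq> x'"
    using assms(4) by (auto simp: adjacent_def)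
  have face: "closed_segment (x, y) (x', z) face_of ?S"
    using closed_segment_S3_face_of[OF assms(2) z edge(1)] .
  then have "(x', z) extreme_point_of ?S"
    using extreme_point_of_face extreme_point_of_segment by blast
  then show "\<exists>ys. supp ys \<subseteq> supp y \<and> (x', ys) extreme_point_of ?S \<and> adjacent ?S (x, y) (x', ys)"
    using z(2) assms(2) edge(2) face by (auto simp: adjacent_def)
qed

end
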